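(* Uniformly in $0<\alpha<1/2$, for all $u\ge2$, \[\sqrt{Y_1}=u^{1/(2\alpha)}+O\Bigl(\frac1{u^2}\Bigr),\] where $Y_1=Y_1(u,\alpha)$ is the unique positive solution $Y$ of $u=Y^\alpha-Y^{-1-\alpha}$. *)

theory Defs
  imports Complex_Main
begin

definition Y1 :: "real \<Rightarrow> real \<Rightarrow> real" where
  "Y1 u \<alpha> = (THE Y. Y > 0 \<and> u = Y powr \<alpha> - Y powr (-1 - \<alpha>))"

end

theory Submission
  imports Defs
begin

text \<open>
  Put \<open>p = 1/(2\<alpha>)\<close>, so that \<open>u powr p\<close> is the square root of \<open>u powr (1/\<alpha>)\<close>, the solution
  of \<open>u = Y powr \<alpha>\<close>. Since the correction term \<open>Y powr (-1-\<alpha>)\<close> is positive, \<open>Y\<^sub>1\<close> exceeds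
  \<open>u powr (1/\<alpha>)\<close>; feeding this back into the correction term gives
  \<open>Y\<^sub>1 powr \<alpha> \<le> u (1 + x)\<close> with \<open>x = u powr (-2p-2)\<close>. Hence
  \<open>sqrt Y\<^sub>1 \<le> u powr p (1 + x) powr p \<le> u powr p (1 + 2px)\<close>, and the error
  \<open>2p u powr (-p) / u\<^sup>2\<close> is at most \<open>4/u\<^sup>2\<close> because \<open>p u powr (-p)\<close> is bounded for \<open>u \<ge> 2\<close>,
  uniformly in \<open>p\<close>.
\<close>

lemma half_exponent_le_powr:
  fixes u p :: real
  assumes "2 \<le> u" and "0 \<le> p"
  shows "p / 2 \<le> u powr p"
proof -
  have "1/2 \<le> ln (2::real)"
    using exp_half_le2 by (subst ln_ge_iff) auto
  then have "p / 2 \<le> p * ln 2"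
    using mult_left_mono[OF _ \<open>0 \<le> p\<close>, of "1/2" "ln 2"] by simp
  also have "\<dots> \<le> exp (p * ln 2)"
    using exp_ge_add_one_self[of "p * ln 2"] by linarith
  also have "\<dots> = 2 powr p"
    by (simp add: powr_def)
  also have "\<dots> \<le> u powr p"
    using assms by (intro powr_mono2) auto
  finally show ?thesis .
qed

lemma one_plus_powr_le:
  fixes x p :: real
  assumes "0 \<le> x" and "0 \<le> p" and "p * x \<le> 1/4"
  shows "(1 + x) powr p \<le> 1 + 2 * (p * x)"
proof -
  have "(1 + x) powr p = exp (p * ln (1 + x))"
    using assms(1) by (simp add: powr_def)
  also have "\<dots> \<le> exp (p * x)"
    using assms by (simp add: ln_add_one_self_le_self mult_left_mono)
  also have "\<dots> \<le> 1 + 2 * (p * x)"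
    using assms by (intro real_exp_bound_lemma) (auto simp: mult_nonneg_nonneg)
  finally show ?thesis .
qed

lemma Y1_equation_strict_mono:
  fixes a y z :: real
  assumes "0 < a" and "0 < y" and "y < z"
  shows "y powr a - y powr (-1 - a) < z powr a - z powr (-1 - a)"
proof -
  have "y powr a < z powr a"
    using assms by (simp add: powr_less_mono2)
  moreover have "z powr (-1 - a) < y powr (-1 - a)"
    using assms by (intro powr_less_mono2_neg) auto
  ultimately show ?thesis by simp
qed

lemma Y1_solves:
  fixes a u :: real
  assumes a: "0 < a" and u: "0 \<le> u"
  shows "0 < Y1 u a" and "Y1 u a powr a = u + Y1 u a powr (-1 - a)"
proof -
  let ?f = "\<lambda>Y::real. Y powr a - Y powr (-1 - a)"
  define b where "b = (u + 1) powr (1/a)"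
  have b: "1 \<le> b"
    unfolding b_def using u a by (simp add: ge_one_powr_ge_zero)
  have "b powr (-1 - a) \<le> b powr 0"
    using b a by (intro powr_mono) auto
  moreover have "b powr a = u + 1"
    unfolding b_def using u a by (simp add: powr_powr)
  ultimately have "u \<le> ?f b"
    using b by simp
  moreover have "?f 1 \<le> u"
    using u by simp
  ultimately obtain Y where Y: "1 \<le> Y" "?f Y = u"
    using IVT[of ?f 1 u b] b by (force intro!: continuous_intros)
  have "Y1 u a = Y"
    unfolding Y1_def
  proof (rule the_equality)
    show "0 < Y \<and> u = ?f Y"
      using Y by simp
    show "Z = Y" if "0 < Z \<and> u = ?f Z" for Z
      using that Y Y1_equation_strict_mono[OF a, of Z Y] Y1_equation_strict_mono[OF a, of Y Z]
      by (cases Z Y rule: linorder_cases) auto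
  qed
  with Y show "0 < Y1 u a" and "Y1 u a powr a = u + Y1 u a powr (-1 - a)"
    by auto
qed

lemma powr_inverse_less_Y1:
  fixes a u :: real
  assumes a: "0 < a" and u: "0 < u"
  shows "u powr (1/a) < Y1 u a"
proof -
  have Y: "0 < Y1 u a"
    using Y1_solves(1)[OF a] u by simp
  have "u < Y1 u a powr a"
    using Y1_solves(2)[OF a] u Y by simp
  then have "u powr (1/a) < (Y1 u a powr a) powr (1/a)"
    using a u by (intro powr_less_mono2) auto
  also have "\<dots> = Y1 u a"
    using Y a by (simp add: powr_powr)
  finally show ?thesis .
qed

lemma Y1_powr_le:
  fixes a u :: real
  assumes a: "0 < a" and u: "0 < u"
  shows "Y1 u a powr a \<le> u * (1 + u powr (-1/a - 2))"
proof -
  have "Y1 u a powr (-1 - a) \<le> (u powr (1/a)) powr (-1 - a)"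
    using powr_inverse_less_Y1[OF a u] a u by (intro powr_mono2') auto
  also have "\<dots> = u powr (1 + (-1/a - 2))"
    using a by (simp add: powr_powr field_simps)
  also have "\<dots> = u * u powr (-1/a - 2)"
    using powr_add[of u 1 "-1/a - 2"] u by simp
  finally show ?thesis
    using Y1_solves(2)[OF a] u by (simp add: distrib_left)
qed

lemma sqrt_Y1_le:
  fixes a u :: real
  assumes a: "0 < a" and u: "0 < u"
  shows "sqrt (Y1 u a) \<le> u powr (1 / (2 * a)) * (1 + u powr (-1/a - 2)) powr (1 / (2 * a))"
proof -
  have Y: "0 < Y1 u a"
    using Y1_solves(1)[OF a] u by simp
  have "sqrt (Y1 u a) = Y1 u a powr (a * (1 / (2 * a)))"
    using Y a by (simp add: powr_half_sqrt)
  also have "\<dots> = (Y1 u a powr a) powr (1 / (2 * a))"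
    by (simp add: powr_powr)
  also have "\<dots> \<le> (u * (1 + u powr (-1/a - 2))) powr (1 / (2 * a))"
    using Y1_powr_le[OF a u] a by (intro powr_mono2) auto
  also have "\<dots> = u powr (1 / (2 * a)) * (1 + u powr (-1/a - 2)) powr (1 / (2 * a))"
    using u by (simp add: powr_mult)
  finally show ?thesis .
qed

lemma sqrt_Y1_error_le:
  fixes a u :: real
  assumes a: "0 < a" and u: "2 \<le> u"
  shows "sqrt (Y1 u a) - u powr (1 / (2 * a)) \<le> 4 / u\<^sup>2"
proof -
  define p where "p = 1 / (2 * a)"
  define x where "x = u powr (-2 * p - 2)"
  have p: "0 \<le> p" and x: "0 \<le> x"
    using a by (simp_all add: p_def x_def)
  have u0: "0 < u"
    using u by simp
  have x_split: "x = u powr (-2 * p) * u powr (-2)"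
    unfolding x_def by (simp add: powr_add[symmetric])
  have u_sq: "u powr (-2) = 1 / u\<^sup>2"
    using u0 by (simp add: powr_minus_divide)
  have p_decay: "p * u powr (-p) \<le> 2"
    using half_exponent_le_powr[OF u p] u0 by (simp add: powr_minus_divide divide_le_eq)
  have "p * u powr (-2 * p) \<le> 1"
    using half_exponent_le_powr[OF u, of "2 * p"] p u0 by (simp add: powr_minus_divide divide_le_eq)
  then have "p * x \<le> 1 / u\<^sup>2"
    unfolding x_split u_sq by (simp add: divide_right_mono)
  also have "\<dots> \<le> 1/4"
    using u by (simp add: power2_eq_square field_simps mult_mono[of 2 u 2 u, simplified])
  finally have "p * x \<le> 1/4" .
  have "sqrt (Y1 u a) \<le> u powr p * (1 + x) powr p"
    using sqrt_Y1_le[OF a u0] unfolding p_def x_def by (simp add: field_simps)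
  also have "\<dots> \<le> u powr p * (1 + 2 * (p * x))"
    using one_plus_powr_le[OF x p \<open>p * x \<le> 1/4\<close>] by (intro mult_left_mono) auto
  also have "\<dots> = u powr p + 2 * (p * u powr (-p)) / u\<^sup>2"
    unfolding x_split u_sq using u0 by (simp add: powr_add[symmetric] field_simps)
  also have "\<dots> \<le> u powr p + 4 / u\<^sup>2"
    using p_decay by (simp add: divide_right_mono)
  finally show ?thesis
    unfolding p_def by simp
qed

theorem lemma14:
  shows "\<exists>C. \<forall>\<alpha> u. 0 < \<alpha> \<and> \<alpha> < 1/2 \<and> u \<ge> 2 \<longrightarrow>
           \<bar>sqrt (Y1 u \<alpha>) - u powr (1 / (2 * \<alpha>))\<bar> \<le> C / u\<^sup>2"
proof (intro exI[of _ 4] allI impI)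
  fix a u :: real
  assume "0 < a \<and> a < 1/2 \<and> 2 \<le> u"
  then have a: "0 < a" and u: "2 \<le> u"
    by auto
  have "u powr (1 / (2 * a)) = sqrt (u powr (1/a))"
    using powr_half_sqrt_powr[of u "1/a"] u by (simp add: mult.commute)
  also have "\<dots> \<le> sqrt (Y1 u a)"
    using less_imp_le[OF powr_inverse_less_Y1[OF a, of u]] u by simp
  finally have "u powr (1 / (2 * a)) \<le> sqrt (Y1 u a)" .
  with sqrt_Y1_error_le[OF a u]
  show "\<bar>sqrt (Y1 u a) - u powr (1 / (2 * a))\<bar> \<le> 4 / u\<^sup>2"
    by simp
qed

end
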